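(* Let $\mathcal C\subseteq\mathbb F_2^n$ be a binary linear code with error correcting capability $t$, $\prec$ an admissible order, and $(N,G)$ the output of Algorithm R for $\mathcal C$ and $<_e$. Let $w\in[X]$ and let $\mathrm{Can}(w,G)$ be an irreducible word obtained from $w$ by a finite sequence of one-step reductions modulo $G$. If $\mathrm{weight}(\psi(\mathrm{Can}(w,G)))\le t$, then $\psi(w)\in B(\mathcal C,t)$ and $\psi(\mathrm{Can}(w,G))$ is the error vector of $\psi(w)$, i.e. the unique $e\in\mathbb F_2^n$ with $\mathrm{weight}(e)\le t$ and $\psi(w)-e\in\mathcal C$. If $\mathrm{weight}(\psi(\mathrm{Can}(w,G)))>t$, then $\psi(w)$ contains more than $t$ errors, i.e. $\psi(w)\notin B(\mathcal C,t)$.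
   Context: Binary setting: $[X]$ is the free commutative monoid on $X=\{x_1,\dots,x_n\}$; $\psi(\prod x_i^{\beta_i})=(\beta_i\bmod 2)_i\in\mathbb F_2^n$; $\mathcal C$ has dimension $k$ and parity check matrix $H$ ($n\times(n-k)$, $\mathcal C=\{c:cH=0\}$); syndrome $\xi(w)=\psi(w)H$. Weight is Hamming weight, $d$ the minimum distance, $t=\lfloor(d-1)/2\rfloor$, and $B(\mathcal C,t)=\{y\in\mathbb F_2^n:\exists c\in\mathcal C,\ d(c,y)\le t\}$. $\mathrm{Ind}(w)=\{i:x_i\mid w\}$; error-vector order: $u<_e w$ iff $|\mathrm{Ind}(u)|<|\mathrm{Ind}(w)|$, or equality and $u\prec w$. Algorithm R: list $L$ sorted increasingly by $<_e$, set $N$, set $G$ of binomials; initially $L=(1)$, $N=G=\emptyset$. While $L\ne\emptyset$: remove the $<_e$-smallest $w$; if $w$ is divisible by the leading word of a binomial in $G$, discard it; otherwise if some $w'\in N$ has $\xi(w')=\xi(w)$, add $w-w'$ to $G$ with leading word $w$; else add $w$ to $N$ and insert all $wx$ ($x\in X$) into $L$. Output $(N,G)$. One-step reduction modulo $G$: a non-standard word (some exponent $\ge 2$) reduces to its standard form (exponents mod 2); a standard word $w=us$ with $u-u'\in G$ of leading word $u$ reduces to $u's$. Irreducible means no reduction applies. *)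

theory Defs
  imports Main
begin

text \<open>A word is represented by its exponent vector; indices are 0..n-1.\<close>
type_synonym word = "nat \<Rightarrow> nat"

definition words :: "nat \<Rightarrow> word set" where
  "words n = {w. \<forall>i. n \<le> i \<longrightarrow> w i = 0}"

definition one_w :: word where
  "one_w = (\<lambda>_. 0)"

definition wmult :: "word \<Rightarrow> word \<Rightarrow> word" where
  "wmult u w = (\<lambda>i. u i + w i)"

definition var :: "nat \<Rightarrow> word" where
  "var i = (\<lambda>j. if j = i then 1 else 0)"

definition wdvd :: "word \<Rightarrow> word \<Rightarrow> bool" where
  "wdvd u w \<longleftrightarrow> (\<forall>i. u i \<le> w i)"

definition Ind :: "word \<Rightarrow> nat set" where
  "Ind w = {i. 1 \<le> w i}"

type_synonym vec = "nat \<Rightarrow> bool"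

definition vecs :: "nat \<Rightarrow> vec set" where
  "vecs n = {v. \<forall>i. n \<le> i \<longrightarrow> \<not> v i}"

definition zero_vec :: vec where
  "zero_vec = (\<lambda>_. False)"

definition vadd :: "vec \<Rightarrow> vec \<Rightarrow> vec" where
  "vadd u v = (\<lambda>i. u i \<noteq> v i)"

definition weight :: "nat \<Rightarrow> vec \<Rightarrow> nat" where
  "weight n v = card {i. i < n \<and> v i}"

definition hdist :: "nat \<Rightarrow> vec \<Rightarrow> vec \<Rightarrow> nat" where
  "hdist n u v = weight n (vadd u v)"

definition psi :: "word \<Rightarrow> vec" where
  "psi w = (\<lambda>i. odd (w i))"

text \<open>H i j is the entry in row i < n, column j < m; syndrome of v is v H.\<close>
definition syn :: "nat \<Rightarrow> nat \<Rightarrow> (nat \<Rightarrow> nat \<Rightarrow> bool) \<Rightarrow> vec \<Rightarrow> vec" where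
  "syn n m H v = (\<lambda>j. j < m \<and> odd (card {i. i < n \<and> v i \<and> H i j}))"

definition code :: "nat \<Rightarrow> nat \<Rightarrow> (nat \<Rightarrow> nat \<Rightarrow> bool) \<Rightarrow> vec set" where
  "code n m H = {c \<in> vecs n. syn n m H c = zero_vec}"

definition xi :: "nat \<Rightarrow> nat \<Rightarrow> (nat \<Rightarrow> nat \<Rightarrow> bool) \<Rightarrow> word \<Rightarrow> vec" where
  "xi n m H w = syn n m H (psi w)"

definition min_dist :: "nat \<Rightarrow> vec set \<Rightarrow> nat" where
  "min_dist n C = Min {weight n c | c. c \<in> C \<and> c \<noteq> zero_vec}"

definition tcap :: "nat \<Rightarrow> vec set \<Rightarrow> nat" where
  "tcap n C = (min_dist n C - 1) div 2"

definition ball_code :: "nat \<Rightarrow> vec set \<Rightarrow> nat \<Rightarrow> vec set" where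
  "ball_code n C t = {y \<in> vecs n. \<exists>c\<in>C. hdist n c y \<le> t}"

definition error_vector :: "nat \<Rightarrow> vec set \<Rightarrow> nat \<Rightarrow> vec \<Rightarrow> vec" where
  "error_vector n C t y = (THE e. e \<in> vecs n \<and> weight n e \<le> t \<and> vadd y e \<in> C)"

definition admissible :: "nat \<Rightarrow> (word \<Rightarrow> word \<Rightarrow> bool) \<Rightarrow> bool" where
  "admissible n prec \<longleftrightarrow>
     (\<forall>u\<in>words n. \<not> prec u u) \<and>
     (\<forall>u\<in>words n. \<forall>v\<in>words n. \<forall>w\<in>words n. prec u v \<longrightarrow> prec v w \<longrightarrow> prec u w) \<and>
     (\<forall>u\<in>words n. \<forall>v\<in>words n. u \<noteq> v \<longrightarrow> prec u v \<or> prec v u) \<and>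
     (\<forall>w\<in>words n. w \<noteq> one_w \<longrightarrow> prec one_w w) \<and>
     (\<forall>u\<in>words n. \<forall>w\<in>words n. \<forall>s\<in>words n. prec u w \<longrightarrow> prec (wmult u s) (wmult w s))"

definition err_less :: "(word \<Rightarrow> word \<Rightarrow> bool) \<Rightarrow> word \<Rightarrow> word \<Rightarrow> bool" where
  "err_less prec u w \<longleftrightarrow>
     card (Ind u) < card (Ind w) \<or> (card (Ind u) = card (Ind w) \<and> prec u w)"

text \<open>State (L, N, G): L is the (duplicate-free) list of pending words, kept as a set and
  processed in increasing err_less order; G is a set of binomials w - w' stored as pairs
  (leading word w, other word w').\<close>
type_synonym stateR = "word set \<times> word set \<times> (word \<times> word) set"

inductive algR_step :: "nat \<Rightarrow> nat \<Rightarrow> (nat \<Rightarrow> nat \<Rightarrow> bool) \<Rightarrow> (word \<Rightarrow> word \<Rightarrow> bool)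
    \<Rightarrow> stateR \<Rightarrow> stateR \<Rightarrow> bool"
  for n m H prec where
  discard: "\<lbrakk> w \<in> L; \<forall>u\<in>L. u \<noteq> w \<longrightarrow> err_less prec w u;
             \<exists>(a, b)\<in>G. wdvd a w \<rbrakk>
    \<Longrightarrow> algR_step n m H prec (L, N, G) (L - {w}, N, G)"
| addG: "\<lbrakk> w \<in> L; \<forall>u\<in>L. u \<noteq> w \<longrightarrow> err_less prec w u;
           \<not> (\<exists>(a, b)\<in>G. wdvd a w); w' \<in> N; xi n m H w' = xi n m H w \<rbrakk>
    \<Longrightarrow> algR_step n m H prec (L, N, G) (L - {w}, N, insert (w, w') G)"
| addN: "\<lbrakk> w \<in> L; \<forall>u\<in>L. u \<noteq> w \<longrightarrow> err_less prec w u;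
           \<not> (\<exists>(a, b)\<in>G. wdvd a w); \<not> (\<exists>w'\<in>N. xi n m H w' = xi n m H w) \<rbrakk>
    \<Longrightarrow> algR_step n m H prec (L, N, G)
          ((L - {w}) \<union> {wmult w (var i) | i. i < n}, insert w N, G)"

definition algR_output :: "nat \<Rightarrow> nat \<Rightarrow> (nat \<Rightarrow> nat \<Rightarrow> bool) \<Rightarrow> (word \<Rightarrow> word \<Rightarrow> bool)
    \<Rightarrow> word set \<Rightarrow> (word \<times> word) set \<Rightarrow> bool" where
  "algR_output n m H prec N G \<longleftrightarrow>
     (algR_step n m H prec)\<^sup>*\<^sup>* ({one_w}, {}, {}) ({}, N, G)"

inductive red1 :: "(word \<times> word) set \<Rightarrow> word \<Rightarrow> word \<Rightarrow> bool" for G where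
  nonstd: "\<exists>i. 2 \<le> w i \<Longrightarrow> red1 G w (\<lambda>i. w i mod 2)"
| binom: "\<lbrakk> \<forall>i. w i < 2; (u, u') \<in> G; w = wmult u s \<rbrakk> \<Longrightarrow> red1 G w (wmult u' s)"

definition irreducible_w :: "(word \<times> word) set \<Rightarrow> word \<Rightarrow> bool" where
  "irreducible_w G v \<longleftrightarrow> \<not> (\<exists>v'. red1 G v v')"

end

theory Submission
  imports Defs
begin

text \<open>Throughout Algorithm R the state (L, N, G) satisfies an invariant: N consists of standard
  words with pairwise distinct syndromes, every binomial u - u' of G has u' in N with the
  syndrome of u and u' \<open><\<^sub>e\<close> u, and every word lies in N or is a multiple of a leading
  word of G or of a pending word of L. Hence at termination an irreducible word lies in N, and
  since one-step reductions preserve the syndrome, Can(w,G) is the word of N with the syndrome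
  of w. Reducing a standard word outside N by G and then to standard form yields a
  \<open><\<^sub>e\<close>-smaller standard word with the same syndrome, so every word of N has least
  support among the standard words of its syndrome: weight(psi(Can(w,G))) is the least weight
  in the coset psi(w) + C. If it is at most t, psi(Can(w,G)) is the error vector, which is
  unique because two vectors of weight at most t with equal syndromes coincide; otherwise no
  vector within distance t of C has the syndrome of psi(w).\<close>

definition standard_word :: "word \<Rightarrow> bool" where
  "standard_word w \<longleftrightarrow> (\<forall>i. w i < 2)"

definition std_form :: "word \<Rightarrow> word" where
  "std_form w = (\<lambda>i. w i mod 2)"

definition word_of_vec :: "vec \<Rightarrow> word" where
  "word_of_vec e = (\<lambda>i. if e i then 1 else 0)"

lemma wmult_commute: "wmult u s = wmult s u"
  by (auto simp: wmult_def)

lemma wmult_one_w [simp]: "wmult one_w u = u"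
  by (simp add: wmult_def one_w_def)

lemma one_w_in_words [simp]: "one_w \<in> words n"
  by (simp add: words_def one_w_def)

lemma wmult_in_words: "u \<in> words n \<Longrightarrow> s \<in> words n \<Longrightarrow> wmult u s \<in> words n"
  by (simp add: words_def wmult_def)

lemma var_in_words: "i < n \<Longrightarrow> var i \<in> words n"
  by (simp add: words_def var_def)

lemma wdvd_trans: "wdvd a b \<Longrightarrow> wdvd b c \<Longrightarrow> wdvd a c"
  unfolding wdvd_def using order_trans by metis

lemma wdvd_antisym: "wdvd a b \<Longrightarrow> wdvd b a \<Longrightarrow> a = b"
  unfolding wdvd_def by (simp add: antisym fun_eq_iff)

lemma wdvd_wmult: "wdvd a (wmult a s)"
  by (simp add: wdvd_def wmult_def)

lemma wdvd_in_words:
  assumes "wdvd a w" and "w \<in> words n"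
  shows "a \<in> words n"
proof -
  have "a i = 0" if "n \<le> i" for i
  proof -
    have "a i \<le> w i" using assms(1) by (simp add: wdvd_def)
    moreover have "w i = 0" using assms(2) that by (simp add: words_def)
    ultimately show ?thesis by simp
  qed
  then show ?thesis
    by (simp add: words_def)
qed

lemma wdvdE:
  assumes "wdvd a w" and "w \<in> words n"
  obtains s where "s \<in> words n" and "w = wmult a s"
proof
  show "(\<lambda>i. w i - a i) \<in> words n" using assms(2) by (simp add: words_def)
  show "w = wmult a (\<lambda>i. w i - a i)" using assms(1) by (auto simp: wdvd_def wmult_def)
qed

lemma Ind_subset_lessThan: "w \<in> words n \<Longrightarrow> Ind w \<subseteq> {..<n}"
  unfolding words_def Ind_def by (auto simp: not_le[symmetric])

lemma finite_Ind: "w \<in> words n \<Longrightarrow> finite (Ind w)"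
  using Ind_subset_lessThan finite_subset by blast

lemma Ind_wmult: "Ind (wmult u s) = Ind u \<union> Ind s"
  by (auto simp: Ind_def wmult_def)

lemma Ind_mono: "wdvd a b \<Longrightarrow> Ind a \<subseteq> Ind b"
  unfolding Ind_def wdvd_def by (auto intro: order_trans)

lemma Ind_disjoint_if_standard: "standard_word (wmult u s) \<Longrightarrow> Ind u \<inter> Ind s = {}"
  unfolding standard_word_def Ind_def wmult_def disjoint_iff
  by (metis add_le_mono mem_Collect_eq not_le one_add_one)

lemma standard_word_eqI:
  assumes "standard_word a" "standard_word b" "Ind a = Ind b"
  shows "a = b"
proof
  fix i
  have "a i < 2" "b i < 2" "1 \<le> a i \<longleftrightarrow> 1 \<le> b i"
    using assms by (auto simp: standard_word_def Ind_def set_eq_iff)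
  then show "a i = b i" by linarith
qed

lemma finite_standard_words: "finite {w \<in> words n. standard_word w}"
proof (rule inj_on_finite)
  show "inj_on Ind {w \<in> words n. standard_word w}"
    by (auto intro: inj_onI standard_word_eqI)
  show "Ind ` {w \<in> words n. standard_word w} \<subseteq> Pow {..<n}"
    using Ind_subset_lessThan by blast
qed simp

lemma std_form_standard: "standard_word (std_form w)"
  by (simp add: standard_word_def std_form_def)

lemma std_form_wdvd: "wdvd (std_form w) w"
  by (simp add: wdvd_def std_form_def)

lemma std_form_in_words: "w \<in> words n \<Longrightarrow> std_form w \<in> words n"
  by (simp add: words_def std_form_def)

lemma psi_std_form: "psi (std_form w) = psi w"
  by (simp add: psi_def std_form_def)

lemma word_of_vec_standard: "standard_word (word_of_vec e)"
  by (simp add: standard_word_def word_of_vec_def)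

lemma word_of_vec_in_words: "e \<in> vecs n \<Longrightarrow> word_of_vec e \<in> words n"
  by (simp add: words_def vecs_def word_of_vec_def)

lemma psi_word_of_vec: "psi (word_of_vec e) = e"
  by (simp add: psi_def word_of_vec_def)

lemma weight_psi_standard:
  assumes "w \<in> words n" "standard_word w"
  shows "weight n (psi w) = card (Ind w)"
proof -
  have "odd (w i) \<longleftrightarrow> i \<in> Ind w" for i
    using assms(2) less_2_cases[of "w i"] by (auto simp: standard_word_def Ind_def)
  then have "{i. i < n \<and> psi w i} = Ind w"
    using Ind_subset_lessThan[OF assms(1)] by (auto simp: psi_def)
  then show ?thesis by (simp add: weight_def)
qed

lemma psi_wmult: "psi (wmult a b) = vadd (psi a) (psi b)"
  by (auto simp: psi_def wmult_def vadd_def)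

lemma card_sym_diff_parity:
  assumes "finite A" "finite B"
  shows "odd (card (sym_diff A B)) \<longleftrightarrow> odd (card A) \<noteq> odd (card B)"
proof -
  have "card (A \<union> B) = card (sym_diff A B \<union> (A \<inter> B))"
    by (rule arg_cong[where f = card]) blast
  also have "\<dots> = card (sym_diff A B) + card (A \<inter> B)"
    using assms by (intro card_Un_disjoint) auto
  finally have "card A + card B = card (sym_diff A B) + 2 * card (A \<inter> B)"
    using card_Un_Int[OF assms] by simp
  then show ?thesis
    by presburger
qed

lemma syn_vadd: "syn n m H (vadd a b) = vadd (syn n m H a) (syn n m H b)"
proof
  fix j
  let ?S = "\<lambda>v. {i. i < n \<and> v i \<and> H i j}"
  have "?S (vadd a b) = sym_diff (?S a) (?S b)"
    by (auto simp: vadd_def)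
  then show "syn n m H (vadd a b) j = vadd (syn n m H a) (syn n m H b) j"
    using card_sym_diff_parity[of "?S a" "?S b"] by (auto simp: syn_def vadd_def)
qed

lemma xi_wmult: "xi n m H (wmult a b) = vadd (xi n m H a) (xi n m H b)"
  by (simp add: xi_def psi_wmult syn_vadd)

lemma xi_std_form: "xi n m H (std_form w) = xi n m H w"
  by (simp add: xi_def psi_std_form)

lemma wdvd_one_w: "wdvd one_w w"
  by (simp add: wdvd_def one_w_def)

lemma wdvd_successor:
  assumes "wdvd w v" "v \<in> words n" "v \<noteq> w"
  obtains i where "i < n" "wdvd (wmult w (var i)) v"
proof -
  obtain i where "w i < v i"
    using assms(1,3) by (metis wdvd_antisym wdvd_def not_le)
  moreover from this have "i < n"
    using assms(2) by (auto simp: words_def not_le[symmetric])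
  moreover have "wdvd (wmult w (var i)) v"
    using assms(1) \<open>w i < v i\<close> by (auto simp: wdvd_def wmult_def var_def Suc_leI)
  ultimately show thesis
    using that by blast
qed

lemma vadd_in_vecs: "a \<in> vecs n \<Longrightarrow> b \<in> vecs n \<Longrightarrow> vadd a b \<in> vecs n"
  by (simp add: vecs_def vadd_def)

lemma psi_in_vecs: "w \<in> words n \<Longrightarrow> psi w \<in> vecs n"
  by (simp add: words_def vecs_def psi_def)

lemma zero_vec_vadd [simp]: "vadd zero_vec a = a"
  by (simp add: vadd_def zero_vec_def)

lemma vadd_eq_zero_vec_iff: "vadd a b = zero_vec \<longleftrightarrow> a = b"
  by (auto simp: vadd_def zero_vec_def fun_eq_iff)

lemma weight_vadd_le: "weight n (vadd a b) \<le> weight n a + weight n b"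
proof -
  have "{i. i < n \<and> vadd a b i} \<subseteq> {i. i < n \<and> a i} \<union> {i. i < n \<and> b i}"
    by (auto simp: vadd_def)
  then have "weight n (vadd a b) \<le> card ({i. i < n \<and> a i} \<union> {i. i < n \<and> b i})"
    unfolding weight_def by (intro card_mono) auto
  also have "\<dots> \<le> weight n a + weight n b"
    unfolding weight_def by (rule card_Un_le)
  finally show ?thesis .
qed

lemma weight_pos:
  assumes "c \<in> vecs n" and "c \<noteq> zero_vec"
  shows "0 < weight n c"
proof -
  obtain i where "c i"
    using assms(2) by (auto simp: zero_vec_def)
  moreover from this have "i < n"
    using assms(1) by (auto simp: vecs_def not_less[symmetric])
  ultimately show ?thesis
    unfolding weight_def by (auto simp: card_gt_0_iff)
qed

lemma vadd_in_code_iff: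
  "y \<in> vecs n \<Longrightarrow> e \<in> vecs n \<Longrightarrow> vadd y e \<in> code n m H \<longleftrightarrow> syn n m H y = syn n m H e"
  by (simp add: code_def syn_vadd vadd_in_vecs vadd_eq_zero_vec_iff)

lemma weight_le: "weight n c \<le> n"
  unfolding weight_def using card_mono[of "{..<n}" "{i. i < n \<and> c i}"] by auto

lemma finite_weights: "finite {weight n c | c. P c}"
  by (rule finite_subset[of _ "{..n}"]) (auto simp: weight_le)

lemma min_dist_le_weight: "c \<in> C \<Longrightarrow> c \<noteq> zero_vec \<Longrightarrow> min_dist n C \<le> weight n c"
  unfolding min_dist_def by (rule Min_le[OF finite_weights]) blast

lemma min_dist_pos:
  assumes "C \<subseteq> vecs n" and "\<exists>c\<in>C. c \<noteq> zero_vec"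
  shows "0 < min_dist n C"
proof -
  have "{weight n c | c. c \<in> C \<and> c \<noteq> zero_vec} \<noteq> {}"
    using assms(2) by blast
  then have "min_dist n C \<in> {weight n c | c. c \<in> C \<and> c \<noteq> zero_vec}"
    unfolding min_dist_def by (rule Min_in[OF finite_weights])
  then obtain c where "c \<in> C" "c \<noteq> zero_vec" "min_dist n C = weight n c"
    by blast
  then show ?thesis
    using assms(1) weight_pos by auto
qed

lemma inj_on_syn_light_vectors:
  assumes nontriv: "\<exists>c\<in>code n m H. c \<noteq> zero_vec"
  shows "inj_on (syn n m H) {e \<in> vecs n. weight n e \<le> tcap n (code n m H)}"
proof (rule inj_onI, rule ccontr)
  fix e e'
  assume e: "e \<in> {e \<in> vecs n. weight n e \<le> tcap n (code n m H)}"
    and e': "e' \<in> {e \<in> vecs n. weight n e \<le> tcap n (code n m H)}"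
    and "syn n m H e = syn n m H e'" and "e \<noteq> e'"
  then have "vadd e e' \<in> code n m H" "vadd e e' \<noteq> zero_vec"
    by (simp_all add: vadd_in_code_iff vadd_eq_zero_vec_iff)
  then have "min_dist n (code n m H) \<le> weight n (vadd e e')"
    by (rule min_dist_le_weight)
  also have "\<dots> \<le> 2 * tcap n (code n m H)"
    using weight_vadd_le[of n e e'] e e' by simp
  finally have "min_dist n (code n m H) \<le> 2 * tcap n (code n m H)" .
  moreover have "0 < min_dist n (code n m H)"
    using min_dist_pos[OF _ nontriv] by (auto simp: code_def)
  ultimately show False
    unfolding tcap_def by linarith
qed

lemma error_vector_eqI:
  assumes nontriv: "\<exists>c\<in>code n m H. c \<noteq> zero_vec"
    and y: "y \<in> vecs n"
    and e: "e \<in> vecs n" "weight n e \<le> tcap n (code n m H)" "syn n m H e = syn n m H y"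
  shows "error_vector n (code n m H) (tcap n (code n m H)) y = e"
  unfolding error_vector_def
proof (rule the_equality)
  show "e \<in> vecs n \<and> weight n e \<le> tcap n (code n m H) \<and> vadd y e \<in> code n m H"
    using y e by (simp add: vadd_in_code_iff)
next
  fix e'
  assume e': "e' \<in> vecs n \<and> weight n e' \<le> tcap n (code n m H) \<and> vadd y e' \<in> code n m H"
  then have "syn n m H e' = syn n m H e"
    using vadd_in_code_iff[OF y, of e'] e(3) by simp
  then show "e' = e"
    using inj_onD[OF inj_on_syn_light_vectors[OF nontriv]] e e' by simp
qed

lemma ball_code_iff:
  "y \<in> ball_code n (code n m H) t \<longleftrightarrow>
     y \<in> vecs n \<and> (\<exists>e\<in>vecs n. weight n e \<le> t \<and> syn n m H e = syn n m H y)"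
proof
  assume "y \<in> ball_code n (code n m H) t"
  then obtain c where y: "y \<in> vecs n" and c: "c \<in> code n m H" and "weight n (vadd c y) \<le> t"
    by (auto simp: ball_code_def hdist_def)
  moreover have "vadd c y \<in> vecs n"
    using c y by (simp add: code_def vadd_in_vecs)
  moreover have "syn n m H (vadd c y) = syn n m H y"
    using c by (simp add: code_def syn_vadd)
  ultimately show "y \<in> vecs n \<and> (\<exists>e\<in>vecs n. weight n e \<le> t \<and> syn n m H e = syn n m H y)"
    by auto
next
  assume "y \<in> vecs n \<and> (\<exists>e\<in>vecs n. weight n e \<le> t \<and> syn n m H e = syn n m H y)"
  then obtain e where y: "y \<in> vecs n" and e: "e \<in> vecs n" "weight n e \<le> t" "syn n m H e = syn n m H y"
    by auto
  have "vadd y e \<in> code n m H"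
    using y e by (simp add: vadd_in_code_iff)
  moreover have "hdist n (vadd y e) y = weight n e"
    unfolding hdist_def by (rule arg_cong[where f = "weight n"]) (auto simp: vadd_def)
  ultimately have "\<exists>c\<in>code n m H. hdist n c y \<le> t"
    using e(2) by metis
  then show "y \<in> ball_code n (code n m H) t"
    using y by (simp add: ball_code_def)
qed

text \<open>At termination L = {}, so the last clause says that every word outside N is divisible
  by a leading word of G.\<close>

definition algR_inv :: "nat \<Rightarrow> nat \<Rightarrow> (nat \<Rightarrow> nat \<Rightarrow> bool) \<Rightarrow> (word \<Rightarrow> word \<Rightarrow> bool)
    \<Rightarrow> word set \<Rightarrow> word set \<Rightarrow> (word \<times> word) set \<Rightarrow> bool" where
  "algR_inv n m H prec L N G \<longleftrightarrow>
     L \<subseteq> words n \<and> N \<subseteq> words n \<and> inj_on (xi n m H) N \<and> (\<forall>v\<in>N. standard_word v)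
     \<and> (\<forall>(u, u')\<in>G. u \<in> words n \<and> u' \<in> N \<and> xi n m H u' = xi n m H u \<and> err_less prec u' u)
     \<and> (\<forall>v\<in>N. \<forall>l\<in>L. err_less prec v l)
     \<and> (\<forall>w\<in>words n. w \<in> N \<or> (\<exists>(u, u')\<in>G. wdvd u w) \<or> (\<exists>l\<in>L. wdvd l w))"

lemma algR_invD:
  assumes "algR_inv n m H prec L N G"
  shows "L \<subseteq> words n" "N \<subseteq> words n" "inj_on (xi n m H) N" "v \<in> N \<Longrightarrow> standard_word v"
    and "(u, u') \<in> G \<Longrightarrow> u \<in> words n \<and> u' \<in> N \<and> xi n m H u' = xi n m H u \<and> err_less prec u' u"
    and "v \<in> N \<Longrightarrow> l \<in> L \<Longrightarrow> err_less prec v l"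
    and "w \<in> words n \<Longrightarrow> w \<in> N \<or> (\<exists>(u, u')\<in>G. wdvd u w) \<or> (\<exists>l\<in>L. wdvd l w)"
  using assms unfolding algR_inv_def by blast+

lemma algR_inv_init: "algR_inv n m H prec {one_w} {} {}"
  by (simp add: algR_inv_def wdvd_one_w)

lemma algR_inv_discard:
  assumes inv: "algR_inv n m H prec L N G" and "(a, b) \<in> G" and "wdvd a w"
  shows "algR_inv n m H prec (L - {w}) N G"
proof -
  have "v \<in> N \<or> (\<exists>(u, u')\<in>G. wdvd u v) \<or> (\<exists>l\<in>L - {w}. wdvd l v)" if "v \<in> words n" for v
    using algR_invD(7)[OF inv that] assms(2,3) wdvd_trans by blast
  then show ?thesis
    using inv unfolding algR_inv_def by blast
qed

lemma algR_inv_addG: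
  assumes inv: "algR_inv n m H prec L N G" and "w \<in> L" "w' \<in> N" "xi n m H w' = xi n m H w"
  shows "algR_inv n m H prec (L - {w}) N (insert (w, w') G)"
proof -
  have "v \<in> N \<or> (\<exists>(u, u')\<in>insert (w, w') G. wdvd u v) \<or> (\<exists>l\<in>L - {w}. wdvd l v)"
    if "v \<in> words n" for v
    using algR_invD(7)[OF inv that] by blast
  moreover have "w \<in> words n" "err_less prec w' w"
    using algR_invD(1,6)[OF inv] assms(2,3) by auto
  ultimately show ?thesis
    using inv assms(3,4) unfolding algR_inv_def by blast
qed

lemma algR_inv_addN_covers:
  assumes inv: "algR_inv n m H prec L N G" and x: "x \<in> words n"
  shows "x \<in> insert w N \<or> (\<exists>(u, u')\<in>G. wdvd u x)
           \<or> (\<exists>l\<in>(L - {w}) \<union> {wmult w (var i) | i. i < n}. wdvd l x)"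
proof -
  have "\<exists>i<n. wdvd (wmult w (var i)) x" if "wdvd w x" "x \<noteq> w"
    using wdvd_successor[OF that(1) x that(2)] by blast
  then show ?thesis
    using algR_invD(7)[OF inv x] by blast
qed

lemma red1_preserves_syndrome:
  assumes G: "\<forall>(u, u')\<in>G. u' \<in> words n \<and> xi n m H u' = xi n m H u"
    and "red1 G a b" and a: "a \<in> words n"
  shows "b \<in> words n \<and> xi n m H b = xi n m H a"
  using assms(2)
proof cases
  case nonstd
  then show ?thesis
    using a by (simp add: words_def xi_def psi_def)
next
  case (binom u u' s)
  then have "s \<in> words n"
    using a wdvd_in_words[OF wdvd_wmult] by (metis wmult_commute)
  moreover have "u' \<in> words n" "xi n m H u' = xi n m H u"
    using G \<open>(u, u') \<in> G\<close> by auto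
  ultimately show ?thesis
    using binom by (simp add: wmult_in_words xi_wmult)
qed

lemma rtranclp_red1_preserves_syndrome:
  assumes G: "\<forall>(u, u')\<in>G. u' \<in> words n \<and> xi n m H u' = xi n m H u"
    and "(red1 G)\<^sup>*\<^sup>* a b" and a: "a \<in> words n"
  shows "b \<in> words n \<and> xi n m H b = xi n m H a"
  using assms(2)
proof (induction rule: rtranclp_induct)
  case (step b c)
  then show ?case
    using red1_preserves_syndrome[OF G step(2)] by simp
qed (use a in simp)

lemma irreducible_standard: "irreducible_w G v \<Longrightarrow> standard_word v"
  unfolding irreducible_w_def standard_word_def by (metis not_less red1.nonstd)

lemma irreducible_not_lead_divisible:
  assumes "irreducible_w G v" and "(u, u') \<in> G"
  shows "\<not> wdvd u v"
proof
  assume "wdvd u v"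
  then have "v = wmult u (\<lambda>i. v i - u i)"
    by (auto simp: wdvd_def wmult_def)
  then have "red1 G v (wmult u' (\<lambda>i. v i - u i))"
    using red1.binom irreducible_standard[OF assms(1)] assms(2) unfolding standard_word_def by blast
  then show False
    using assms(1) by (auto simp: irreducible_w_def)
qed

lemma algR_inv_irreducible_in_N:
  assumes "algR_inv n m H prec {} N G" and "v \<in> words n" and "irreducible_w G v"
  shows "v \<in> N"
  using algR_invD(7)[OF assms(1,2)] irreducible_not_lead_divisible[OF assms(3)] by blast

lemma err_less_if_card_Ind_less: "card (Ind u) < card (Ind w) \<Longrightarrow> err_less prec u w"
  by (simp add: err_less_def)

context
  fixes n m :: nat and H :: "nat \<Rightarrow> nat \<Rightarrow> bool" and prec :: "word \<Rightarrow> word \<Rightarrow> bool"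
  assumes adm: "admissible n prec"
begin

lemma admissible_irrefl: "u \<in> words n \<Longrightarrow> \<not> prec u u"
  using adm by (simp add: admissible_def)

lemma admissible_trans:
  "u \<in> words n \<Longrightarrow> v \<in> words n \<Longrightarrow> w \<in> words n \<Longrightarrow> prec u v \<Longrightarrow> prec v w \<Longrightarrow> prec u w"
  using adm unfolding admissible_def by blast

lemma admissible_one_less: "w \<in> words n \<Longrightarrow> w \<noteq> one_w \<Longrightarrow> prec one_w w"
  using adm unfolding admissible_def by blast

lemma admissible_wmult:
  "u \<in> words n \<Longrightarrow> w \<in> words n \<Longrightarrow> s \<in> words n \<Longrightarrow> prec u w \<Longrightarrow> prec (wmult u s) (wmult w s)"
  using adm unfolding admissible_def by blast

lemma err_less_irrefl: "u \<in> words n \<Longrightarrow> \<not> err_less prec u u"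
  by (simp add: err_less_def admissible_irrefl)

lemma err_less_trans:
  "u \<in> words n \<Longrightarrow> v \<in> words n \<Longrightarrow> w \<in> words n
    \<Longrightarrow> err_less prec u v \<Longrightarrow> err_less prec v w \<Longrightarrow> err_less prec u w"
  unfolding err_less_def using admissible_trans[of u v w] by auto

lemma err_less_asym:
  "u \<in> words n \<Longrightarrow> v \<in> words n \<Longrightarrow> err_less prec u v \<Longrightarrow> \<not> err_less prec v u"
  using err_less_trans err_less_irrefl by blast

lemma err_less_if_wdvd:
  assumes b: "b \<in> words n" and "wdvd a b" and "a \<noteq> b"
  shows "err_less prec a b"
proof -
  have a: "a \<in> words n"
    using wdvd_in_words[OF \<open>wdvd a b\<close> b] .
  obtain s where s: "s \<in> words n" "b = wmult a s"
    using wdvdE[OF \<open>wdvd a b\<close> b] .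
  then have "s \<noteq> one_w"
    using \<open>a \<noteq> b\<close> by (auto simp: wmult_commute)
  then have "prec (wmult one_w a) (wmult s a)"
    using admissible_wmult[OF one_w_in_words s(1) a] admissible_one_less[OF s(1)] by blast
  then have "prec a b"
    using s(2) by (simp add: wmult_commute)
  moreover have "card (Ind a) \<le> card (Ind b)"
    using card_mono[OF finite_Ind[OF b] Ind_mono[OF \<open>wdvd a b\<close>]] .
  ultimately show ?thesis
    by (auto simp: err_less_def)
qed

lemma err_less_wdvd_trans:
  assumes "b \<in> words n" "c \<in> words n" "wdvd a b" "err_less prec b c"
  shows "err_less prec a c"
proof (cases "a = b")
  case False
  then show ?thesis
    using assms err_less_trans err_less_if_wdvd wdvd_in_words by metis
qed (use assms in simp)

lemma err_less_wmult:
  assumes words: "u' \<in> words n" "u \<in> words n" "s \<in> words n"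
    and less: "err_less prec u' u" and disj: "Ind u \<inter> Ind s = {}"
  shows "err_less prec (wmult u' s) (wmult u s)"
proof -
  have card_u's: "card (Ind (wmult u' s)) \<le> card (Ind u') + card (Ind s)"
    unfolding Ind_wmult by (rule card_Un_le)
  have card_us: "card (Ind (wmult u s)) = card (Ind u) + card (Ind s)"
    unfolding Ind_wmult using finite_Ind[OF words(2)] finite_Ind[OF words(3)] disj
    by (rule card_Un_disjoint)
  show ?thesis
  proof (cases "card (Ind (wmult u' s)) < card (Ind (wmult u s))")
    case False
    then have "prec u' u" and card_eq: "card (Ind (wmult u' s)) = card (Ind (wmult u s))"
      using less card_u's card_us unfolding err_less_def by linarith+
    then have "prec (wmult u' s) (wmult u s)"
      using admissible_wmult words by blast
    with card_eq show ?thesis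
      by (simp add: err_less_def)
  qed (rule err_less_if_card_Ind_less)
qed

lemma wf_err_less_standard_words:
  "wf {(a, b). a \<in> words n \<and> standard_word a \<and> b \<in> words n \<and> standard_word b
                    \<and> err_less prec a b}" (is "wf ?R")
proof (rule finite_acyclic_wf)
  have "?R \<subseteq> {w \<in> words n. standard_word w} \<times> {w \<in> words n. standard_word w}"
    by blast
  then show "finite ?R"
    using finite_standard_words finite_subset by blast
  have "trans ?R"
    using err_less_trans by (auto intro: transI)
  moreover have "irrefl ?R"
    using err_less_irrefl by (auto simp: irrefl_def)
  ultimately show "acyclic ?R"
    by (simp add: acyclic_irrefl)
qed

lemma err_less_successor:
  assumes "w \<in> words n" "i < n"
  shows "err_less prec w (wmult w (var i))"
proof (rule err_less_if_wdvd)
  show "wmult w (var i) \<in> words n"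
    using assms by (simp add: wmult_in_words var_in_words)
  show "w \<noteq> wmult w (var i)"
    by (auto simp: wmult_def var_def fun_eq_iff)
qed (rule wdvd_wmult)

lemma algR_inv_proper_divisor_in_N:
  assumes inv: "algR_inv n m H prec L N G" and w: "w \<in> L"
    and least: "\<forall>u\<in>L. u \<noteq> w \<longrightarrow> err_less prec w u"
    and not_lead: "\<not> (\<exists>(a, b)\<in>G. wdvd a w)"
    and d: "wdvd d w" "d \<noteq> w"
  shows "d \<in> N"
proof -
  have w_words: "w \<in> words n"
    using algR_invD(1)[OF inv] w by blast
  have "\<not> wdvd l d" if "l \<in> L" for l
  proof
    assume "wdvd l d"
    then have "wdvd l w" "l \<noteq> w"
      using d wdvd_trans wdvd_antisym by blast+
    then have "err_less prec l w" and "err_less prec w l"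
      using err_less_if_wdvd[OF w_words] least that by blast+
    then show False
      using err_less_asym w_words algR_invD(1)[OF inv] that by blast
  qed
  moreover have "\<not> (\<exists>(a, b)\<in>G. wdvd a d)"
    using not_lead d(1) wdvd_trans by blast
  ultimately show "d \<in> N"
    using algR_invD(7)[OF inv wdvd_in_words[OF d(1) w_words]] by blast
qed

lemma algR_inv_selected_standard:
  assumes inv: "algR_inv n m H prec L N G" and w: "w \<in> L"
    and least: "\<forall>u\<in>L. u \<noteq> w \<longrightarrow> err_less prec w u"
    and not_lead: "\<not> (\<exists>(a, b)\<in>G. wdvd a w)"
    and new: "\<not> (\<exists>w'\<in>N. xi n m H w' = xi n m H w)"
  shows "standard_word w"
proof (rule ccontr)
  assume "\<not> standard_word w"
  then have "std_form w \<noteq> w"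
    using std_form_standard by metis
  then have "std_form w \<in> N"
    using algR_inv_proper_divisor_in_N[OF inv w least not_lead std_form_wdvd] by blast
  moreover have "xi n m H (std_form w) = xi n m H w"
    by (rule xi_std_form)
  ultimately show False
    using new by blast
qed

lemma algR_inv_addN_err_less:
  assumes inv: "algR_inv n m H prec L N G" and w: "w \<in> L"
    and least: "\<forall>u\<in>L. u \<noteq> w \<longrightarrow> err_less prec w u"
    and v: "v \<in> insert w N" and l: "l \<in> (L - {w}) \<union> {wmult w (var i) | i. i < n}"
  shows "err_less prec v l"
proof -
  have w_words: "w \<in> words n"
    using algR_invD(1)[OF inv] w by blast
  consider (old) "l \<in> L - {w}" | (successor) i where "i < n" "l = wmult w (var i)"
    using l by blast
  then show ?thesis
  proof cases
    case old
    then show ?thesis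
      using v least algR_invD(6)[OF inv] by auto
  next
    case successor
    then have "err_less prec w l" and l_words: "l \<in> words n"
      using err_less_successor[OF w_words] w_words by (auto intro: wmult_in_words var_in_words)
    moreover have "err_less prec v w" "v \<in> words n" if "v \<noteq> w"
      using that v w algR_invD(2,6)[OF inv] by auto
    ultimately show ?thesis
      using err_less_trans[OF _ w_words l_words] by (cases "v = w") auto
  qed
qed

lemma algR_inv_addN:
  assumes inv: "algR_inv n m H prec L N G" and w: "w \<in> L"
    and least: "\<forall>u\<in>L. u \<noteq> w \<longrightarrow> err_less prec w u"
    and not_lead: "\<not> (\<exists>(a, b)\<in>G. wdvd a w)"
    and new: "\<not> (\<exists>w'\<in>N. xi n m H w' = xi n m H w)"
  shows "algR_inv n m H prec ((L - {w}) \<union> {wmult w (var i) | i. i < n}) (insert w N) G"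
  unfolding algR_inv_def
proof (intro conjI)
  have w_words: "w \<in> words n"
    using algR_invD(1)[OF inv] w by blast
  show "(L - {w}) \<union> {wmult w (var i) | i. i < n} \<subseteq> words n"
    using algR_invD(1)[OF inv] w_words by (auto intro: wmult_in_words var_in_words)
  show "insert w N \<subseteq> words n"
    using algR_invD(2)[OF inv] w_words by blast
  show "inj_on (xi n m H) (insert w N)"
    using algR_invD(3)[OF inv] new by auto
  show "\<forall>v\<in>insert w N. standard_word v"
    using algR_invD(4)[OF inv] algR_inv_selected_standard[OF inv w least not_lead new] by blast
  show "\<forall>(u, u')\<in>G. u \<in> words n \<and> u' \<in> insert w N \<and> xi n m H u' = xi n m H u \<and> err_less prec u' u"
    using algR_invD(5)[OF inv] by blast
  show "\<forall>v\<in>insert w N. \<forall>l\<in>(L - {w}) \<union> {wmult w (var i) | i. i < n}. err_less prec v l"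
    using algR_inv_addN_err_less[OF inv w least] by blast
  show "\<forall>x\<in>words n. x \<in> insert w N \<or> (\<exists>(u, u')\<in>G. wdvd u x)
          \<or> (\<exists>l\<in>(L - {w}) \<union> {wmult w (var i) | i. i < n}. wdvd l x)"
    using algR_inv_addN_covers[OF inv] by blast
qed

lemma algR_inv_step:
  assumes "algR_step n m H prec (L, N, G) (L', N', G')" and inv: "algR_inv n m H prec L N G"
  shows "algR_inv n m H prec L' N' G'"
  using assms(1)
proof cases
  case (discard w)
  then obtain a b where "(a, b) \<in> G" "wdvd a w"
    by blast
  with discard show ?thesis
    using algR_inv_discard[OF inv] by simp
next
  case (addG w w')
  then show ?thesis
    using algR_inv_addG[OF inv] by simp
next
  case (addN w)
  then show ?thesis
    using algR_inv_addN[OF inv] by simp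
qed

lemma algR_inv_output:
  assumes "algR_output n m H prec N G"
  shows "algR_inv n m H prec {} N G"
proof -
  have "case S of (L', N', G') \<Rightarrow> algR_inv n m H prec L' N' G'"
    if "(algR_step n m H prec)\<^sup>*\<^sup>* ({one_w}, {}, {}) S" for S
    using that
  proof (induction rule: rtranclp_induct)
    case base
    then show ?case
      using algR_inv_init by simp
  next
    case (step S S')
    then show ?case
      using algR_inv_step by (cases S, cases S') simp
  qed
  then show ?thesis
    using assms by (fastforce simp: algR_output_def)
qed

lemma algR_inv_reduce:
  assumes inv: "algR_inv n m H prec {} N G"
    and e: "e \<in> words n" "standard_word e" "e \<notin> N"
  obtains e' where "e' \<in> words n" "standard_word e'" "xi n m H e' = xi n m H e"
    "err_less prec e' e"
proof -
  obtain u u' where uu': "(u, u') \<in> G" "wdvd u e"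
    using algR_invD(7)[OF inv e(1)] e(3) by blast
  then have u: "u \<in> words n" and u': "u' \<in> words n" "xi n m H u' = xi n m H u" "err_less prec u' u"
    using algR_invD(2,5)[OF inv] by auto
  obtain s where s: "s \<in> words n" "e = wmult u s"
    using wdvdE[OF uu'(2) e(1)] .
  have "err_less prec (wmult u' s) e"
    using err_less_wmult[OF u'(1) u s(1) u'(3)] Ind_disjoint_if_standard e(2) s(2) by simp
  then have "err_less prec (std_form (wmult u' s)) e"
    using err_less_wdvd_trans[OF wmult_in_words[OF u'(1) s(1)] e(1) std_form_wdvd] by blast
  moreover have "xi n m H (std_form (wmult u' s)) = xi n m H e"
    using u'(2) s(2) by (simp add: xi_std_form xi_wmult)
  ultimately show thesis
    using that std_form_standard std_form_in_words wmult_in_words[OF u'(1) s(1)] by blast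
qed

text \<open>The \<open><\<^sub>e\<close>-least standard word with the syndrome of v lies in N by
  algR_inv_reduce, hence equals v.\<close>

lemma algR_inv_card_Ind_le:
  assumes inv: "algR_inv n m H prec {} N G" and v: "v \<in> N"
    and e: "e \<in> words n" "standard_word e" "xi n m H e = xi n m H v"
  shows "card (Ind v) \<le> card (Ind e)"
proof -
  let ?S = "{e'. e' \<in> words n \<and> standard_word e' \<and> xi n m H e' = xi n m H v}"
  let ?R = "{(a, b). a \<in> words n \<and> standard_word a \<and> b \<in> words n \<and> standard_word b
                    \<and> err_less prec a b}"
  have "e \<in> ?S"
    using e by simp
  then obtain e0 where e0: "e0 \<in> ?S" and e0_min: "\<And>e'. (e', e0) \<in> ?R \<Longrightarrow> e' \<notin> ?S"
    by (rule wfE_min[OF wf_err_less_standard_words]) fast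
  have "e0 \<in> N"
  proof (rule ccontr)
    assume "e0 \<notin> N"
    moreover have "e0 \<in> words n" "standard_word e0"
      using e0 by simp_all
    ultimately obtain e' where "e' \<in> words n" "standard_word e'" "xi n m H e' = xi n m H e0"
      "err_less prec e' e0"
      using algR_inv_reduce[OF inv] by blast
    then have "(e', e0) \<in> ?R" "e' \<in> ?S"
      using e0 by simp_all
    then show False
      using e0_min by blast
  qed
  then have "e0 = v"
    using inj_onD[OF algR_invD(3)[OF inv]] v e0 by simp
  then have "\<not> err_less prec e v"
    using e0_min[of e] e \<open>e \<in> ?S\<close> algR_invD(2)[OF inv] algR_invD(4)[OF inv] v by blast
  then show ?thesis
    by (simp add: err_less_def)
qed

lemma algR_inv_weight_le:
  assumes inv: "algR_inv n m H prec {} N G" and v: "v \<in> N"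
    and e: "e \<in> vecs n" "syn n m H e = xi n m H v"
  shows "weight n (psi v) \<le> weight n e"
proof -
  have v_words: "v \<in> words n"
    using algR_invD(2)[OF inv] v by blast
  have "card (Ind v) \<le> card (Ind (word_of_vec e))"
    using algR_inv_card_Ind_le[OF inv v word_of_vec_in_words[OF e(1)] word_of_vec_standard] e(2)
    by (simp add: xi_def psi_word_of_vec)
  then show ?thesis
    using weight_psi_standard[OF v_words algR_invD(4)[OF inv v]]
      weight_psi_standard[OF word_of_vec_in_words[OF e(1)] word_of_vec_standard]
    by (simp add: psi_word_of_vec)
qed

end

theorem theorem5p1:
  fixes n m :: nat and H :: "nat \<Rightarrow> nat \<Rightarrow> bool"
    and prec :: "word \<Rightarrow> word \<Rightarrow> bool"
    and N :: "word set" and G :: "(word \<times> word) set" and w v :: word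
  assumes nontriv: "\<exists>c\<in>code n m H. c \<noteq> zero_vec"
    and adm: "admissible n prec"
    and out: "algR_output n m H prec N G"
    and w: "w \<in> words n"
    and reds: "(red1 G)\<^sup>*\<^sup>* w v"
    and irr: "irreducible_w G v"
  shows "(weight n (psi v) \<le> tcap n (code n m H) \<longrightarrow>
            psi w \<in> ball_code n (code n m H) (tcap n (code n m H)) \<and>
            psi v = error_vector n (code n m H) (tcap n (code n m H)) (psi w))
       \<and> (tcap n (code n m H) < weight n (psi v) \<longrightarrow>
            psi w \<notin> ball_code n (code n m H) (tcap n (code n m H)))"
proof -
  have inv: "algR_inv n m H prec {} N G"
    using algR_inv_output[OF adm out] .
  have "v \<in> words n \<and> xi n m H v = xi n m H w"
    using rtranclp_red1_preserves_syndrome[OF _ reds w] algR_invD(2,5)[OF inv] by blast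
  then have v: "v \<in> words n" and syn_v: "syn n m H (psi v) = syn n m H (psi w)"
    by (simp_all add: xi_def)
  have v_N: "v \<in> N"
    using algR_inv_irreducible_in_N[OF inv v irr] .
  show ?thesis
  proof (intro conjI impI)
    assume light: "weight n (psi v) \<le> tcap n (code n m H)"
    show "psi w \<in> ball_code n (code n m H) (tcap n (code n m H))"
      unfolding ball_code_iff using psi_in_vecs[OF w] psi_in_vecs[OF v] light syn_v by blast
    show "psi v = error_vector n (code n m H) (tcap n (code n m H)) (psi w)"
      using error_vector_eqI[OF nontriv psi_in_vecs[OF w] psi_in_vecs[OF v] light syn_v] by simp
  next
    assume heavy: "tcap n (code n m H) < weight n (psi v)"
    show "psi w \<notin> ball_code n (code n m H) (tcap n (code n m H))"
    proof
      assume "psi w \<in> ball_code n (code n m H) (tcap n (code n m H))"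
      then obtain e where "e \<in> vecs n" "weight n e \<le> tcap n (code n m H)"
        "syn n m H e = xi n m H v"
        using syn_v by (auto simp: ball_code_iff xi_def)
      then show False
        using algR_inv_weight_le[OF adm inv v_N] heavy by fastforce
    qed
  qed
qed

end
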